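(* Let $X_1,X_2$, $A,B,C,D$, $X$, $\mathcal{A}$, $\mathcal{D}$ be as in the context with $L=0$, and assume $\overline{\mathsf{R}(A)}=X_1$ and $\overline{\mathsf{R}(D)}=X_2$. Then the operators $CA^{-1}:\mathsf{R}(A)\to X_2$, $Ax\mapsto Cx$, and $BD^{-1}:\mathsf{R}(D)\to X_1$, $Dy\mapsto By$, are well defined and extend uniquely to bounded operators $G=\overline{CA^{-1}}\in\mathscr{L}(X_1,X_2)$ and $H=\overline{BD^{-1}}\in\mathscr{L}(X_2,X_1)$. If one of the operators $I-HG$ and $I-GH$ is boundedly invertible, then $$\|\mathcal{D}x\|_X\lesssim\|\mathcal{A}x\|_X\quad\text{for all }x\in\mathsf{D}(\mathcal{D})=\mathsf{D}(\mathcal{A}).$$ In particular, if in addition $A$ and $D$ are sectorial, this estimate holds if for some $\varepsilon>0$ either $\sup\{\|B(t+D)^{-1}C(t+A)^{-1}\|:t\in(0,\varepsilon)\}<1$ or $\sup\{\|C(t+A)^{-1}B(t+D)^{-1}\|:t\in(0,\varepsilon)\}<1$.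
   Context: All Banach spaces are complex. A linear operator $T$ on a Banach space $Y$ is sectorial if there is $\omega\in(0,\pi)$ with $\sigma(T)\subseteq\{z\in\mathbb{C}:|\arg z|\le\omega\}\cup\{0\}$, $\overline{\mathsf{D}(T)}=\overline{\mathsf{R}(T)}=Y$ and $\sup_{|\arg\lambda|>\omega}\|\lambda(\lambda-T)^{-1}\|<\infty$. Setting: $X_1,X_2$ Banach spaces; $A$ on $X_1$ and $D$ on $X_2$ closed densely defined linear operators; $B:\mathsf{D}(B)\subseteq X_2\to X_1$, $C:\mathsf{D}(C)\subseteq X_1\to X_2$ linear with $\mathsf{D}(D)\subseteq\mathsf{D}(B)$, $\mathsf{D}(A)\subseteq\mathsf{D}(C)$ and constants $c_A,c_D\ge0$ with $\|Cx\|\le c_A\|Ax\|$ ($x\in\mathsf{D}(A)$), $\|By\|\le c_D\|Dy\|$ ($y\in\mathsf{D}(D)$) (this is the case $L=0$). $X=X_1\times X_2$, $\mathcal{A}=\begin{bmatrix}A&B\\C&D\end{bmatrix}$, $\mathcal{D}=\begin{bmatrix}A&0\\0&D\end{bmatrix}$, both with domain $\mathsf{D}(A)\times\mathsf{D}(D)$. *)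

theory Defs
  imports "HOL-Analysis.Analysis"
begin

class complex_vector = real_vector +
  fixes scaleC :: "complex \<Rightarrow> 'a \<Rightarrow> 'a" (infixr \<open>*\<^sub>C\<close> 75)
  assumes scaleC_add_right: "a *\<^sub>C (x + y) = a *\<^sub>C x + a *\<^sub>C y"
    and scaleC_add_left: "(a + b) *\<^sub>C x = a *\<^sub>C x + b *\<^sub>C x"
    and scaleC_scaleC: "a *\<^sub>C (b *\<^sub>C x) = (a * b) *\<^sub>C x"
    and scaleC_one: "1 *\<^sub>C x = x"
    and scaleR_scaleC: "r *\<^sub>R x = complex_of_real r *\<^sub>C x"

class complex_normed_vector = complex_vector + real_normed_vector +
  assumes norm_scaleC: "norm (a *\<^sub>C x) = cmod a * norm x"

text \<open>A complex Banach space is a type of class complex_normed_vector and banach.\<close>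

definition csubspace :: "'a::complex_vector set \<Rightarrow> bool" where
  "csubspace S \<longleftrightarrow> 0 \<in> S \<and> (\<forall>x\<in>S. \<forall>y\<in>S. x + y \<in> S) \<and> (\<forall>c. \<forall>x\<in>S. c *\<^sub>C x \<in> S)"

definition clinear_on :: "'a::complex_vector set \<Rightarrow> ('a \<Rightarrow> 'b::complex_vector) \<Rightarrow> bool" where
  "clinear_on S f \<longleftrightarrow> (\<forall>x\<in>S. \<forall>y\<in>S. f (x + y) = f x + f y) \<and> (\<forall>c. \<forall>x\<in>S. f (c *\<^sub>C x) = c *\<^sub>C f x)"

definition lin_op :: "'a::complex_vector set \<Rightarrow> ('a \<Rightarrow> 'b::complex_vector) \<Rightarrow> bool" where
  "lin_op S f \<longleftrightarrow> csubspace S \<and> clinear_on S f"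

definition bounded_clinear :: "('a::complex_normed_vector \<Rightarrow> 'b::complex_normed_vector) \<Rightarrow> bool" where
  "bounded_clinear f \<longleftrightarrow> clinear_on UNIV f \<and> (\<exists>K. \<forall>x. norm (f x) \<le> norm x * K)"

definition closed_dd_op :: "'a::complex_normed_vector set \<Rightarrow> ('a \<Rightarrow> 'b::complex_normed_vector) \<Rightarrow> bool" where
  "closed_dd_op D T \<longleftrightarrow> lin_op D T \<and> closed {(x, T x) | x. x \<in> D} \<and> closure D = UNIV"

text \<open>Inverse of an operator T with domain D (meaningful when T is a bijection D -> UNIV).\<close>
definition pinv :: "'a set \<Rightarrow> ('a \<Rightarrow> 'b) \<Rightarrow> 'b \<Rightarrow> 'a" where
  "pinv D T y = (THE x. x \<in> D \<and> T x = y)"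

definition boundedly_invertible :: "('a::complex_normed_vector \<Rightarrow> 'b::complex_normed_vector) \<Rightarrow> bool" where
  "boundedly_invertible T \<longleftrightarrow> bounded_clinear T \<and>
     (\<exists>S. bounded_clinear S \<and> (\<forall>x. S (T x) = x) \<and> (\<forall>y. T (S y) = y))"

definition in_resolvent_set :: "'a::complex_normed_vector set \<Rightarrow> ('a \<Rightarrow> 'a) \<Rightarrow> complex \<Rightarrow> bool" where
  "in_resolvent_set D T l \<longleftrightarrow> bij_betw (\<lambda>x. l *\<^sub>C x - T x) D UNIV \<and>
     bounded_clinear (pinv D (\<lambda>x. l *\<^sub>C x - T x))"

definition spectrum_op :: "'a::complex_normed_vector set \<Rightarrow> ('a \<Rightarrow> 'a) \<Rightarrow> complex set" where
  "spectrum_op D T = {l. \<not> in_resolvent_set D T l}"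

definition sectorial :: "'a::complex_normed_vector set \<Rightarrow> ('a \<Rightarrow> 'a) \<Rightarrow> bool" where
  "sectorial D T \<longleftrightarrow> (\<exists>\<omega>. 0 < \<omega> \<and> \<omega> < pi \<and>
     spectrum_op D T \<subseteq> {z. \<bar>Arg z\<bar> \<le> \<omega>} \<union> {0} \<and>
     closure D = UNIV \<and> closure (T ` D) = UNIV \<and>
     (\<exists>M. \<forall>l. \<bar>Arg l\<bar> > \<omega> \<longrightarrow> onorm (\<lambda>y. l *\<^sub>C pinv D (\<lambda>x. l *\<^sub>C x - T x) y) \<le> M))"

end

theory Submission
  imports Defs
begin

text \<open>
  Since \<open>\<parallel>Cx\<parallel> \<le> c\<^sub>A \<parallel>Ax\<parallel>\<close>, the map \<open>Ax \<mapsto> Cx\<close> is well defined and Lipschitz on the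
  dense range of \<open>A\<close>, so it extends uniquely to a bounded \<open>G\<close>; likewise \<open>H\<close> extends
  \<open>Dy \<mapsto> By\<close>. With \<open>u = Ax\<close>, \<open>v = Dy\<close> the estimate says that the block operator
  \<open>(u, v) \<mapsto> (u + Hv, Gu + v)\<close> is bounded below, and by a Schur complement argument this
  follows from \<open>I - HG\<close> or \<open>I - GH\<close> being bounded below.

  In the sectorial case \<open>C(t + A)\<^sup>-\<^sup>1 = G A(t + A)\<^sup>-\<^sup>1\<close>, and \<open>A(t + A)\<^sup>-\<^sup>1 = I - t(t + A)\<^sup>-\<^sup>1\<close>
  tends strongly to \<open>I\<close> as \<open>t \<rightarrow> 0+\<close>, because \<open>t(t + A)\<^sup>-\<^sup>1\<close> is uniformly bounded and
  tends to \<open>0\<close> on the dense set \<open>R(A)\<close>. Hence \<open>B(t + D)\<^sup>-\<^sup>1C(t + A)\<^sup>-\<^sup>1 \<rightarrow> HG\<close> strongly, so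
  \<open>\<parallel>HG\<parallel> \<le> q < 1\<close> and \<open>I - HG\<close> is bounded below.
\<close>

lemma scaleC_of_real: "complex_of_real r *\<^sub>C (x::'a::complex_vector) = r *\<^sub>R x"
  using scaleR_scaleC[of r x] by simp

lemma scaleC_minus_one: "(- 1) *\<^sub>C (x::'a::complex_vector) = - x"
  using scaleC_of_real[of "- 1" x] by simp

lemma lin_op_add:
  assumes "lin_op S f" "x \<in> S" "y \<in> S"
  shows "x + y \<in> S" "f (x + y) = f x + f y"
  using assms by (simp_all add: lin_op_def csubspace_def clinear_on_def)

lemma lin_op_scaleC:
  assumes "lin_op S f" "x \<in> S"
  shows "c *\<^sub>C x \<in> S" "f (c *\<^sub>C x) = c *\<^sub>C f x"
  using assms by (simp_all add: lin_op_def csubspace_def clinear_on_def)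

lemma lin_op_diff:
  assumes "lin_op S f" "x \<in> S" "y \<in> S"
  shows "x - y \<in> S" "f (x - y) = f x - f y"
proof -
  have "x + (- 1) *\<^sub>C y \<in> S" "f (x + (- 1) *\<^sub>C y) = f x + (- 1) *\<^sub>C f y"
    using lin_op_add[OF assms(1,2) lin_op_scaleC(1)[OF assms(1,3)]] lin_op_scaleC(2)[OF assms(1,3)]
    by simp_all
  then show "x - y \<in> S" "f (x - y) = f x - f y" by (simp_all add: scaleC_minus_one)
qed

lemma lin_op_zero: "lin_op S f \<Longrightarrow> f 0 = 0"
  using lin_op_diff[of S f 0 0] by (simp add: lin_op_def csubspace_def)

lemma csubspace_image:
  assumes "lin_op S f"
  shows "csubspace (f ` S)"
  unfolding csubspace_def
proof (intro conjI ballI allI)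
  show "0 \<in> f ` S"
    using lin_op_zero[OF assms] assms image_eqI[of 0 f 0] by (simp add: lin_op_def csubspace_def)
next
  fix z w assume "z \<in> f ` S" "w \<in> f ` S"
  then obtain x y where "x \<in> S" "y \<in> S" "z = f x" "w = f y" by blast
  then show "z + w \<in> f ` S" using lin_op_add[OF assms] by (metis image_eqI)
next
  fix c z assume "z \<in> f ` S"
  then obtain x where "x \<in> S" "z = f x" by blast
  then show "c *\<^sub>C z \<in> f ` S" using lin_op_scaleC[OF assms] by (metis image_eqI)
qed

lemma bounded_clinear_imp_bounded_linear:
  assumes "bounded_clinear f"
  shows "bounded_linear f"
proof -
  from assms obtain K where f: "clinear_on UNIV f" and K: "\<forall>x. norm (f x) \<le> norm x * K"
    unfolding bounded_clinear_def by blast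
  show ?thesis
  proof (rule bounded_linear_intro[where K=K])
    show "f (x + y) = f x + f y" for x y using f unfolding clinear_on_def by blast
    show "f (r *\<^sub>R x) = r *\<^sub>R f x" for r x
      using f unfolding clinear_on_def by (simp add: scaleC_of_real[symmetric])
  qed (use K in blast)
qed

lemma bounded_linear_scaleC_right: "bounded_linear (\<lambda>z::'a::complex_normed_vector. c *\<^sub>C z)"
proof (rule bounded_linear_intro[where K="cmod c"])
  show "c *\<^sub>C (r *\<^sub>R x) = r *\<^sub>R (c *\<^sub>C x)" for r x
    by (simp add: scaleC_of_real[symmetric] scaleC_scaleC mult.commute)
  show "norm (c *\<^sub>C x) \<le> norm x * cmod c" for x :: 'a
    by (simp add: norm_scaleC mult.commute)
qed (rule scaleC_add_right)

lemma dense_eq_continuous: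
  fixes f g :: "'a::topological_space \<Rightarrow> 'b::t2_space"
  assumes "continuous_on UNIV f" "continuous_on UNIV g" "closure S = UNIV"
    and "\<And>x. x \<in> S \<Longrightarrow> f x = g x"
  shows "f = g"
proof -
  have "closure S \<subseteq> {x. f x = g x}"
    using assms by (intro closure_minimal closed_Collect_eq) auto
  then show ?thesis using assms(3) by auto
qed

lemma bounded_clinear_extension_from_dense:
  fixes g :: "'a::complex_normed_vector \<Rightarrow> 'b::{complex_normed_vector,banach}"
  assumes g: "lin_op S g" and dense: "closure S = UNIV" and c: "c \<ge> 0"
    and bound: "\<And>z. z \<in> S \<Longrightarrow> norm (g z) \<le> c * norm z"
  shows "\<exists>G. bounded_clinear G \<and> (\<forall>z\<in>S. G z = g z)"
proof -
  have g_lip: "c-lipschitz_on S g"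
  proof (rule lipschitz_onI)
    fix x y assume "x \<in> S" "y \<in> S"
    then show "dist (g x) (g y) \<le> c * dist x y"
      using bound[of "x - y"] lin_op_diff[OF g] by (simp add: dist_norm)
  qed (fact c)
  then obtain G where G_lip: "c-lipschitz_on UNIV G" and G_eq: "\<forall>z\<in>S. G z = g z"
    using lipschitz_extend_closure[OF g_lip] unfolding dense by blast
  have G_cont: "continuous_on U G" for U
    using lipschitz_on_continuous_on[OF G_lip] continuous_on_subset by blast
  have "(\<lambda>p. G (fst p + snd p)) = (\<lambda>p. G (fst p) + G (snd p))"
  proof (rule dense_eq_continuous[where S="S \<times> S"])
    show "continuous_on UNIV (\<lambda>p. G (fst p + snd p))"
      by (rule continuous_on_compose2[OF G_cont]) (auto intro!: continuous_intros)
    show "continuous_on UNIV (\<lambda>p. G (fst p) + G (snd p))"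
      by (intro continuous_intros continuous_on_compose2[OF G_cont]) auto
    show "closure (S \<times> S) = UNIV" by (simp add: closure_Times dense)
    show "G (fst p + snd p) = G (fst p) + G (snd p)" if "p \<in> S \<times> S" for p
      using that G_eq lin_op_add[OF g] by (auto simp: mem_Times_iff)
  qed
  then have add: "G (x + y) = G x + G y" for x y
    by (metis fst_conv snd_conv)
  have "(\<lambda>z. G (a *\<^sub>C z)) = (\<lambda>z. a *\<^sub>C G z)" for a
  proof (rule dense_eq_continuous[where S=S])
    show "continuous_on UNIV (\<lambda>z. G (a *\<^sub>C z))"
      by (rule continuous_on_compose2[OF G_cont linear_continuous_on[OF bounded_linear_scaleC_right]]) auto
    show "continuous_on UNIV (\<lambda>z. a *\<^sub>C G z)"
      by (rule continuous_on_compose2[OF linear_continuous_on[OF bounded_linear_scaleC_right] G_cont]) auto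
    show "G (a *\<^sub>C z) = a *\<^sub>C G z" if "z \<in> S" for z
      using that G_eq lin_op_scaleC[OF g] by simp
  qed (fact dense)
  then have scale: "G (a *\<^sub>C z) = a *\<^sub>C G z" for a z
    by (simp add: fun_eq_iff)
  have "G 0 = 0" using G_eq lin_op_zero[OF g] g by (simp add: lin_op_def csubspace_def)
  then have "norm (G z) \<le> norm z * c" for z
    using lipschitz_onD[OF G_lip, of z 0] by (simp add: dist_norm mult.commute)
  then have "bounded_clinear G"
    unfolding bounded_clinear_def clinear_on_def using add scale by auto
  then show ?thesis using G_eq by blast
qed

lemma lin_op_factor_through_range:
  assumes A: "lin_op DA A" and C: "lin_op DC C" and sub: "DA \<subseteq> DC"
    and bound: "\<forall>x\<in>DA. norm (C x) \<le> c * norm (A x)"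
  shows "\<exists>g. lin_op (A ` DA) g \<and> (\<forall>x\<in>DA. g (A x) = C x)"
proof -
  have C_cong: "C x = C y" if "x \<in> DA" "y \<in> DA" "A x = A y" for x y
  proof -
    have "norm (C (x - y)) \<le> c * norm (A (x - y))"
      using bound lin_op_diff(1)[OF A that(1,2)] by blast
    then show ?thesis
      using that sub lin_op_diff(2)[OF A that(1,2)] lin_op_diff(2)[OF C, of x y] by auto
  qed
  define g where "g z = C (SOME x. x \<in> DA \<and> A x = z)" for z
  have g: "g (A x) = C x" if "x \<in> DA" for x
  proof -
    let ?x = "SOME x'. x' \<in> DA \<and> A x' = A x"
    have "?x \<in> DA \<and> A ?x = A x" by (rule someI[of _ x]) (use that in simp)
    then show ?thesis unfolding g_def using C_cong that by blast
  qed
  have "clinear_on (A ` DA) g"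
    unfolding clinear_on_def
  proof (intro conjI ballI allI)
    fix z w assume "z \<in> A ` DA" "w \<in> A ` DA"
    then obtain x y where xy: "x \<in> DA" "y \<in> DA" "z = A x" "w = A y" by blast
    then have "g (z + w) = g (A (x + y))" by (simp add: lin_op_add[OF A])
    also have "\<dots> = C (x + y)" using g lin_op_add(1)[OF A xy(1,2)] by blast
    also have "\<dots> = g z + g w" using xy sub g lin_op_add(2)[OF C, of x y] by auto
    finally show "g (z + w) = g z + g w" .
  next
    fix a z assume "z \<in> A ` DA"
    then obtain x where x: "x \<in> DA" "z = A x" by blast
    then have "g (a *\<^sub>C z) = g (A (a *\<^sub>C x))" by (simp add: lin_op_scaleC[OF A])
    also have "\<dots> = C (a *\<^sub>C x)" using g lin_op_scaleC(1)[OF A x(1)] by blast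
    also have "\<dots> = a *\<^sub>C g z" using x sub g lin_op_scaleC(2)[OF C, of x] by auto
    finally show "g (a *\<^sub>C z) = a *\<^sub>C g z" .
  qed
  then show ?thesis using csubspace_image[OF A] g by (auto simp: lin_op_def)
qed

lemma bounded_clinear_eq_on_dense:
  assumes "bounded_clinear F" "bounded_clinear G" "closure S = UNIV" "\<forall>z\<in>S. F z = G z"
  shows "F = G"
  using assms
  by (intro dense_eq_continuous[where S=S] linear_continuous_on bounded_clinear_imp_bounded_linear) auto

lemma ex1_bounded_clinear_extension:
  fixes A :: "'a::complex_normed_vector \<Rightarrow> 'c::complex_normed_vector"
    and C :: "'a \<Rightarrow> 'b::{complex_normed_vector,banach}"
  assumes A: "lin_op DA A" and C: "lin_op DC C" and sub: "DA \<subseteq> DC" and c: "c \<ge> 0"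
    and bound: "\<forall>x\<in>DA. norm (C x) \<le> c * norm (A x)" and dense: "closure (A ` DA) = UNIV"
  shows "\<exists>!G. bounded_clinear G \<and> (\<forall>x\<in>DA. G (A x) = C x)"
proof -
  obtain g where g: "lin_op (A ` DA) g" "\<forall>x\<in>DA. g (A x) = C x"
    using lin_op_factor_through_range[OF A C sub bound] by blast
  moreover have "norm (g z) \<le> c * norm z" if "z \<in> A ` DA" for z
    using that g bound by auto
  ultimately obtain G where G: "bounded_clinear G" "\<forall>z\<in>A ` DA. G z = g z"
    using bounded_clinear_extension_from_dense[OF g(1) dense c] by blast
  then show ?thesis
  proof (intro ex1I[of _ G] conjI)
    fix G' assume G': "bounded_clinear G' \<and> (\<forall>x\<in>DA. G' (A x) = C x)"
    show "G' = G"
      by (rule bounded_clinear_eq_on_dense[OF _ _ dense]) (use G' G g in auto)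
  qed (use G g in auto)
qed

definition bounded_below :: "('a::real_normed_vector \<Rightarrow> 'b::real_normed_vector) \<Rightarrow> bool" where
  "bounded_below T \<longleftrightarrow> (\<exists>c>0. \<forall>x. norm x \<le> c * norm (T x))"

lemma boundedly_invertible_imp_bounded_below:
  assumes "boundedly_invertible T"
  shows "bounded_below T"
proof -
  obtain S where S: "bounded_clinear S" "\<forall>x. S (T x) = x"
    using assms unfolding boundedly_invertible_def by blast
  obtain K where "K > 0" and K: "\<And>y. norm (S y) \<le> norm y * K"
    using bounded_linear.pos_bounded[OF bounded_clinear_imp_bounded_linear[OF S(1)]] by blast
  have "norm x \<le> K * norm (T x)" for x
    using K[of "T x"] S(2) by (simp add: mult.commute)
  then show ?thesis unfolding bounded_below_def using \<open>K > 0\<close> by blast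
qed

lemma bounded_below_id_minus:
  assumes "\<And>u. norm (T u) \<le> q * norm u" and "q < 1"
  shows "bounded_below (\<lambda>u. u - T u)"
  unfolding bounded_below_def
proof (intro exI conjI allI)
  show "1 / (1 - q) > 0" using \<open>q < 1\<close> by simp
  fix u
  have "norm u \<le> norm (T u) + norm (u - T u)" by (rule norm_triangle_sub)
  then have "(1 - q) * norm u \<le> norm (u - T u)"
    using assms(1)[of u] by (simp add: left_diff_distrib)
  then show "norm u \<le> 1 / (1 - q) * norm (u - T u)"
    using \<open>q < 1\<close> by (simp add: field_simps)
qed

lemma bounded_below_block_operator:
  assumes G: "bounded_linear G" and H: "bounded_linear H"
    and schur: "bounded_below (\<lambda>u. u - H (G u))"
  shows "bounded_below (\<lambda>(u, v). (u + H v, G u + v))"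
proof -
  interpret G: bounded_linear G by (rule G)
  interpret H: bounded_linear H by (rule H)
  obtain c where "c > 0" and c: "\<And>u. norm u \<le> c * norm (u - H (G u))"
    using schur unfolding bounded_below_def by blast
  obtain KG where "KG > 0" and KG: "\<And>x. norm (G x) \<le> norm x * KG" using G.pos_bounded by blast
  obtain KH where "KH > 0" and KH: "\<And>x. norm (H x) \<le> norm x * KH" using H.pos_bounded by blast
  define a where "a = c * (1 + KH)"
  have "a > 0" using \<open>c > 0\<close> \<open>KH > 0\<close> by (simp add: a_def)
  have "norm (u, v) \<le> (1 + (1 + KG) * a) * norm (u + H v, G u + v)" for u v
  proof -
    define N where "N = norm (u + H v, G u + v)"
    have p: "norm (u + H v) \<le> N" and r: "norm (G u + v) \<le> N"
      unfolding N_def by (rule norm_fst_le, rule norm_snd_le)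
    have "u - H (G u) = (u + H v) - H (G u + v)" by (simp add: H.add)
    then have "norm u \<le> c * (norm (u + H v) + norm (H (G u + v)))"
      using c[of u] norm_triangle_ineq4[of "u + H v" "H (G u + v)"] \<open>c > 0\<close>
      by (metis mult_left_mono order_trans less_imp_le)
    also have "\<dots> \<le> c * (N + N * KH)"
      using p r KH[of "G u + v"] \<open>c > 0\<close> \<open>KH > 0\<close>
      by (intro mult_left_mono add_mono) (auto intro: order_trans mult_right_mono)
    finally have u: "norm u \<le> a * N" by (simp add: a_def algebra_simps)
    have "norm v \<le> norm (G u + v) + norm (G u)"
      using norm_triangle_ineq4[of "G u + v" "G u"] by simp
    also have "\<dots> \<le> N + KG * (a * N)"
      using r KG[of u] u \<open>KG > 0\<close> by (smt (verit) mult.commute mult_left_mono)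
    finally have v: "norm v \<le> N + KG * (a * N)" .
    have "norm (u, v) \<le> norm u + norm v" by (rule norm_Pair_le)
    also have "\<dots> \<le> (1 + (1 + KG) * a) * N" using u v by (simp add: algebra_simps)
    finally show ?thesis unfolding N_def .
  qed
  moreover have "1 + (1 + KG) * a > 0" using \<open>KG > 0\<close> \<open>a > 0\<close> by (simp add: add_pos_pos)
  ultimately show ?thesis unfolding bounded_below_def by auto
qed

lemma bounded_below_block_operator':
  assumes G: "bounded_linear G" and H: "bounded_linear H"
    and schur: "bounded_below (\<lambda>v. v - G (H v))"
  shows "bounded_below (\<lambda>(u, v). (u + H v, G u + v))"
proof -
  obtain c where "c > 0" and c: "\<And>v u. norm (v, u) \<le> c * norm (v + G u, H v + u)"
    using bounded_below_block_operator[OF H G schur] unfolding bounded_below_def by auto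
  have "norm (u, v) \<le> c * norm (u + H v, G u + v)" for u v
    using c[of v u] by (simp add: norm_commute[of u v] norm_commute[of "u + H v"] add.commute)
  then show ?thesis unfolding bounded_below_def using \<open>c > 0\<close> by auto
qed

lemma tendsto_zero_on_closure_if_uniformly_bounded:
  fixes L :: "'i \<Rightarrow> 'a::real_normed_vector \<Rightarrow> 'b::real_normed_vector"
  assumes bounded: "\<forall>\<^sub>F i in F. linear (L i) \<and> (\<forall>w. norm (L i w) \<le> c * norm w)"
    and dense: "\<And>z. z \<in> S \<Longrightarrow> ((\<lambda>i. L i z) \<longlongrightarrow> 0) F"
    and w: "w \<in> closure S"
  shows "((\<lambda>i. L i w) \<longlongrightarrow> 0) F"
proof (rule tendstoI)
  fix e :: real assume "e > 0"
  define d where "d = e / (2 * (\<bar>c\<bar> + 1))"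
  have "d > 0" using \<open>e > 0\<close> by (simp add: d_def add_pos_nonneg)
  then obtain z where "z \<in> S" and "dist z w < d" using w closure_approachable by blast
  then have "c * norm (w - z) \<le> \<bar>c\<bar> * d"
    by (intro order_trans[OF mult_right_mono[OF abs_ge_self] mult_left_mono])
      (auto simp: dist_norm norm_minus_commute)
  also have "\<dots> < e / 2"
    using \<open>e > 0\<close> by (simp add: d_def field_simps)
  finally have close: "c * norm (w - z) < e / 2" .
  have "\<forall>\<^sub>F i in F. norm (L i z) < e / 2"
    using tendstoD[OF dense[OF \<open>z \<in> S\<close>], of "e / 2"] \<open>e > 0\<close> by simp
  with bounded show "\<forall>\<^sub>F i in F. dist (L i w) 0 < e"
  proof eventually_elim
    case (elim i)
    then have "L i w = L i (w - z) + L i z" by (simp add: linear_diff)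
    then have "norm (L i w) \<le> c * norm (w - z) + norm (L i z)"
      using elim norm_triangle_ineq[of "L i (w - z)" "L i z"] by (metis add_right_mono order_trans)
    then show ?case using close elim by simp
  qed
qed

lemma pinv_eqI: "inj_on f D \<Longrightarrow> x \<in> D \<Longrightarrow> f x = y \<Longrightarrow> pinv D f y = x"
  unfolding pinv_def by (rule the_equality) (auto dest: inj_onD)

lemma pinv_in_domain: "bij_betw f D UNIV \<Longrightarrow> pinv D f y \<in> D"
  and f_pinv: "bij_betw f D UNIV \<Longrightarrow> f (pinv D f y) = y"
proof -
  assume bij: "bij_betw f D UNIV"
  then obtain x where "x \<in> D" "f x = y" by (metis UNIV_I bij_betw_iff_bijections)
  moreover have "pinv D f y = x" by (rule pinv_eqI) (use bij calculation in \<open>auto simp: bij_betw_def\<close>)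
  ultimately show "pinv D f y \<in> D" "f (pinv D f y) = y" by simp_all
qed

definition shift_inv :: "'a::real_vector set \<Rightarrow> ('a \<Rightarrow> 'a) \<Rightarrow> real \<Rightarrow> 'a \<Rightarrow> 'a" where
  "shift_inv DT T t = pinv DT (\<lambda>x. t *\<^sub>R x + T x)"

lemma pinv_scaleC_of_real_eq_shift_inv:
  "pinv DT (\<lambda>x. complex_of_real t *\<^sub>C x + T x) = shift_inv DT T t"
  by (simp add: shift_inv_def scaleC_of_real)

text \<open>Non-negative operators in the sense of Komatsu, with \<open>shift_inv DT T t = (t + T)\<^sup>-\<^sup>1\<close>.\<close>

locale nonnegative_operator =
  fixes DT :: "'a::real_normed_vector set" and T :: "'a \<Rightarrow> 'a" and M :: real
  assumes bij_shift: "t > 0 \<Longrightarrow> bij_betw (\<lambda>x. t *\<^sub>R x + T x) DT UNIV"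
    and bounded_linear_shift_inv: "t > 0 \<Longrightarrow> bounded_linear (shift_inv DT T t)"
    and norm_shift_inv_le: "t > 0 \<Longrightarrow> t * norm (shift_inv DT T t y) \<le> M * norm y"
begin

lemma shift_inv_in_domain: "t > 0 \<Longrightarrow> shift_inv DT T t y \<in> DT"
  unfolding shift_inv_def by (rule pinv_in_domain[OF bij_shift])

lemma T_shift_inv: "t > 0 \<Longrightarrow> T (shift_inv DT T t y) = y - t *\<^sub>R shift_inv DT T t y"
  using f_pinv[OF bij_shift, of t y] unfolding shift_inv_def by (metis add_diff_cancel_left')

lemma shift_inv_T:
  assumes "t > 0" "x \<in> DT"
  shows "shift_inv DT T t (T x) = x - t *\<^sub>R shift_inv DT T t x"
proof -
  interpret R: bounded_linear "shift_inv DT T t" by (rule bounded_linear_shift_inv[OF \<open>t > 0\<close>])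
  have "shift_inv DT T t (t *\<^sub>R x + T x) = x"
    unfolding shift_inv_def using bij_shift[OF \<open>t > 0\<close>] \<open>x \<in> DT\<close>
    by (intro pinv_eqI) (auto simp: bij_betw_def)
  then show ?thesis by (simp add: R.add R.scaleR) (metis add_diff_cancel_left')
qed

lemma bounded_linear_T_shift_inv:
  assumes "t > 0"
  shows "bounded_linear (\<lambda>y. T (shift_inv DT T t y))"
  using assms by (simp add: T_shift_inv bounded_linear_sub bounded_linear_ident
      bounded_linear_const_scaleR bounded_linear_shift_inv)

lemma tendsto_scaled_shift_inv_zero:
  assumes dense: "closure (T ` DT) = UNIV"
  shows "((\<lambda>t. t *\<^sub>R shift_inv DT T t w) \<longlongrightarrow> 0) (at_right 0)"
proof (rule tendsto_zero_on_closure_if_uniformly_bounded[where S="T ` DT"])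
  show "\<forall>\<^sub>F t in at_right 0. linear (\<lambda>w. t *\<^sub>R shift_inv DT T t w)
      \<and> (\<forall>w. norm (t *\<^sub>R shift_inv DT T t w) \<le> M * norm w)"
    using eventually_at_right_less
    by (rule eventually_mono) (auto simp: norm_shift_inv_le bounded_linear.linear
        bounded_linear_const_scaleR bounded_linear_shift_inv)
  show "w \<in> closure (T ` DT)" using dense by simp
next
  fix z assume "z \<in> T ` DT"
  then obtain x where "x \<in> DT" "z = T x" by blast
  have "\<forall>\<^sub>F t in at_right 0. norm (t *\<^sub>R shift_inv DT T t z) \<le> t * ((1 + M) * norm x)"
    using eventually_at_right_less
  proof (rule eventually_mono)
    fix t :: real assume "t > 0"
    have "norm (t *\<^sub>R shift_inv DT T t z) = t * norm (x - t *\<^sub>R shift_inv DT T t x)"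
      using shift_inv_T[OF \<open>t > 0\<close> \<open>x \<in> DT\<close>] \<open>z = T x\<close> \<open>t > 0\<close> by simp
    also have "\<dots> \<le> t * (norm x + t * norm (shift_inv DT T t x))"
      using \<open>t > 0\<close> norm_triangle_ineq4[of x "t *\<^sub>R shift_inv DT T t x"]
      by (intro mult_left_mono) auto
    also have "\<dots> \<le> t * ((1 + M) * norm x)"
      using \<open>t > 0\<close> norm_shift_inv_le[OF \<open>t > 0\<close>, of x] by (intro mult_left_mono) (auto simp: algebra_simps)
    finally show "norm (t *\<^sub>R shift_inv DT T t z) \<le> t * ((1 + M) * norm x)" .
  qed
  moreover have "((\<lambda>t. t * ((1 + M) * norm x)) \<longlongrightarrow> 0) (at_right 0)"
    by (auto intro!: tendsto_eq_intros)
  ultimately show "((\<lambda>t. t *\<^sub>R shift_inv DT T t z) \<longlongrightarrow> 0) (at_right 0)"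
    by (rule Lim_null_comparison)
qed

lemma tendsto_T_shift_inv:
  assumes dense: "closure (T ` DT) = UNIV" and f: "(f \<longlongrightarrow> x) (at_right 0)"
  shows "((\<lambda>t. T (shift_inv DT T t (f t))) \<longlongrightarrow> x) (at_right 0)"
proof -
  have "\<forall>\<^sub>F t in at_right 0. norm (t *\<^sub>R shift_inv DT T t (f t - x)) \<le> M * norm (f t - x)"
    using eventually_at_right_less by (rule eventually_mono) (simp add: norm_shift_inv_le)
  moreover have "((\<lambda>t. M * norm (f t - x)) \<longlongrightarrow> 0) (at_right 0)"
    using tendsto_mult_right_zero[OF tendsto_norm_zero[OF LIM_zero[OF f]]] .
  ultimately have "((\<lambda>t. t *\<^sub>R shift_inv DT T t (f t - x)) \<longlongrightarrow> 0) (at_right 0)"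
    by (rule Lim_null_comparison)
  then have "((\<lambda>t. f t - (t *\<^sub>R shift_inv DT T t (f t - x) + t *\<^sub>R shift_inv DT T t x))
      \<longlongrightarrow> x - (0 + 0)) (at_right 0)"
    by (intro tendsto_intros f tendsto_scaled_shift_inv_zero[OF dense])
  moreover have "\<forall>\<^sub>F t in at_right 0. f t - (t *\<^sub>R shift_inv DT T t (f t - x) + t *\<^sub>R shift_inv DT T t x)
      = T (shift_inv DT T t (f t))"
    using eventually_at_right_less
  proof (rule eventually_mono)
    fix t :: real assume "0 < t"
    then show "f t - (t *\<^sub>R shift_inv DT T t (f t - x) + t *\<^sub>R shift_inv DT T t x)
        = T (shift_inv DT T t (f t))"
      using linear_diff[OF bounded_linear.linear[OF bounded_linear_shift_inv[OF \<open>0 < t\<close>]]]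
      by (simp add: T_shift_inv scaleR_diff_right)
  qed
  ultimately show ?thesis by (simp add: tendsto_cong)
qed

end

lemma sectorial_imp_nonnegative_operator:
  fixes T :: "'a::complex_normed_vector \<Rightarrow> 'a"
  assumes "sectorial DT T"
  shows "\<exists>M. nonnegative_operator DT T M"
proof -
  obtain \<omega> M where "\<omega> < pi" and spectrum: "spectrum_op DT T \<subseteq> {z. \<bar>Arg z\<bar> \<le> \<omega>} \<union> {0}"
    and M: "\<forall>l. \<bar>Arg l\<bar> > \<omega> \<longrightarrow> onorm (\<lambda>y. l *\<^sub>C pinv DT (\<lambda>x. l *\<^sub>C x - T x) y) \<le> M"
    using assms unfolding sectorial_def by blast
  have "bij_betw (\<lambda>x. t *\<^sub>R x + T x) DT UNIV \<and> bounded_linear (shift_inv DT T t)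
      \<and> (\<forall>y. t * norm (shift_inv DT T t y) \<le> M * norm y)" if "t > 0" for t
  proof -
    define l where "l = complex_of_real (- t)"
    define f where "f = (\<lambda>x. l *\<^sub>C x - T x)"
    have "Arg l = pi" unfolding l_def using \<open>t > 0\<close> by (subst Arg_of_real) simp
    then have "\<bar>Arg l\<bar> > \<omega>" and "l \<notin> spectrum_op DT T"
      using spectrum \<open>\<omega> < pi\<close> \<open>t > 0\<close> by (auto simp: l_def)
    then have bij: "bij_betw f DT UNIV" and R: "bounded_linear (pinv DT f)"
      and R_norm: "onorm (\<lambda>y. l *\<^sub>C pinv DT f y) \<le> M"
      using M bounded_clinear_imp_bounded_linear
      by (auto simp: spectrum_op_def in_resolvent_set_def f_def)
    have l_scale: "l *\<^sub>C x = - (t *\<^sub>R x)" for x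
      using scaleC_of_real[of "- t" x] by (simp add: l_def)
    have shift_eq: "(\<lambda>x. t *\<^sub>R x + T x) = uminus \<circ> f"
      by (simp add: f_def fun_eq_iff l_scale)
    have shift_inv_eq: "shift_inv DT T t y = pinv DT f (- y)" for y
    proof -
      have "(- f x = y) = (f x = - y)" for x by auto
      then show ?thesis unfolding shift_inv_def shift_eq pinv_def by simp
    qed
    have "bij_betw (\<lambda>x. t *\<^sub>R x + T x) DT UNIV"
      unfolding shift_eq using bij bij_uminus by (rule bij_betw_trans)
    moreover have "bounded_linear (shift_inv DT T t)"
      unfolding shift_inv_eq[abs_def]
      by (rule bounded_linear_compose[OF R bounded_linear_minus[OF bounded_linear_ident]])
    moreover have "t * norm (shift_inv DT T t y) \<le> M * norm y" for y
    proof -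
      have "bounded_linear (\<lambda>y. l *\<^sub>C pinv DT f y)"
        by (rule bounded_linear_compose[OF bounded_linear_scaleC_right R])
      then have "norm (l *\<^sub>C pinv DT f (- y)) \<le> onorm (\<lambda>y. l *\<^sub>C pinv DT f y) * norm (- y)"
        by (rule onorm)
      also have "\<dots> \<le> M * norm (- y)" by (rule mult_right_mono[OF R_norm norm_ge_zero])
      finally show ?thesis using \<open>t > 0\<close> by (simp add: shift_inv_eq norm_scaleC l_def)
    qed
    ultimately show ?thesis by blast
  qed
  then show ?thesis unfolding nonnegative_operator_def by blast
qed

lemma norm_comp_le_if_shift_inv_sandwich_le:
  assumes A: "nonnegative_operator DA A MA" and D: "nonnegative_operator DD D MD"
    and RA: "closure (A ` DA) = UNIV" and RD: "closure (D ` DD) = UNIV"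
    and G: "bounded_linear G" and GC: "\<forall>x\<in>DA. G (A x) = C x"
    and H: "bounded_linear H" and HB: "\<forall>y\<in>DD. H (D y) = B y"
    and "\<epsilon> > 0"
    and q: "\<forall>t\<in>{0<..<\<epsilon>}. onorm (\<lambda>u. B (shift_inv DD D t (C (shift_inv DA A t u)))) \<le> q"
  shows "norm (H (G u)) \<le> q * norm u"
proof -
  interpret A: nonnegative_operator DA A MA by (rule A)
  interpret D: nonnegative_operator DD D MD by (rule D)
  define K where "K t v = H (D (shift_inv DD D t (G (A (shift_inv DA A t v)))))" for t v
  have lim: "((\<lambda>t. K t u) \<longlongrightarrow> H (G u)) (at_right 0)"
    unfolding K_def
    by (intro bounded_linear.tendsto[OF H] D.tendsto_T_shift_inv[OF RD]
        bounded_linear.tendsto[OF G] A.tendsto_T_shift_inv[OF RA] tendsto_const)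
  have "\<forall>\<^sub>F t in at_right 0. t \<in> {0<..<\<epsilon>}"
    unfolding eventually_at_right_field using \<open>\<epsilon> > 0\<close> by auto
  then have ev: "\<forall>\<^sub>F t in at_right 0. norm (K t u) \<le> q * norm u"
  proof (rule eventually_mono)
    fix t assume t: "t \<in> {0<..<\<epsilon>}"
    then have "t > 0" by simp
    have "(\<lambda>v. B (shift_inv DD D t (C (shift_inv DA A t v)))) = K t"
      using GC HB A.shift_inv_in_domain[OF \<open>t > 0\<close>] D.shift_inv_in_domain[OF \<open>t > 0\<close>]
      by (simp add: K_def fun_eq_iff)
    then have "onorm (K t) \<le> q" using q t by metis
    moreover have "bounded_linear (K t)"
      unfolding K_def
      using bounded_linear_compose[OF H bounded_linear_compose[OF D.bounded_linear_T_shift_inv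
            bounded_linear_compose[OF G A.bounded_linear_T_shift_inv]]] \<open>t > 0\<close> by simp
    ultimately show "norm (K t u) \<le> q * norm u"
      by (metis onorm order_trans mult_right_mono norm_ge_zero)
  qed
  show ?thesis using tendsto_upperbound[OF tendsto_norm[OF lim] ev trivial_limit_at_right_real] .
qed

lemma bounded_below_schur_complement_if_sandwich_lt1:
  assumes MA: "nonnegative_operator DA A MA" and MD: "nonnegative_operator DD D MD"
    and RA: "closure (A ` DA) = UNIV" and RD: "closure (D ` DD) = UNIV"
    and G: "bounded_linear G" "\<forall>x\<in>DA. G (A x) = C x"
    and H: "bounded_linear H" "\<forall>y\<in>DD. H (D y) = B y"
    and sandwich: "\<exists>\<epsilon>>0.
      (\<exists>q<1. \<forall>t\<in>{0<..<\<epsilon>}. onorm (\<lambda>u. B (shift_inv DD D t (C (shift_inv DA A t u)))) \<le> q)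
      \<or> (\<exists>q<1. \<forall>t\<in>{0<..<\<epsilon>}. onorm (\<lambda>v. C (shift_inv DA A t (B (shift_inv DD D t v)))) \<le> q)"
  shows "bounded_below (\<lambda>u. u - H (G u)) \<or> bounded_below (\<lambda>v. v - G (H v))"
proof -
  obtain \<epsilon> where "\<epsilon> > 0"
    and "(\<exists>q<1. \<forall>t\<in>{0<..<\<epsilon>}. onorm (\<lambda>u. B (shift_inv DD D t (C (shift_inv DA A t u)))) \<le> q)
        \<or> (\<exists>q<1. \<forall>t\<in>{0<..<\<epsilon>}. onorm (\<lambda>v. C (shift_inv DA A t (B (shift_inv DD D t v)))) \<le> q)"
    using sandwich by blast
  then show ?thesis
  proof (elim disjE exE conjE)
    fix q assume "q < 1"
      and "\<forall>t\<in>{0<..<\<epsilon>}. onorm (\<lambda>u. B (shift_inv DD D t (C (shift_inv DA A t u)))) \<le> q"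
    then have "norm (H (G u)) \<le> q * norm u" for u
      using norm_comp_le_if_shift_inv_sandwich_le[OF MA MD RA RD G H \<open>\<epsilon> > 0\<close>] by blast
    then show ?thesis using bounded_below_id_minus[of "\<lambda>u. H (G u)"] \<open>q < 1\<close> by blast
  next
    fix q assume "q < 1"
      and "\<forall>t\<in>{0<..<\<epsilon>}. onorm (\<lambda>v. C (shift_inv DA A t (B (shift_inv DD D t v)))) \<le> q"
    then have "norm (G (H v)) \<le> q * norm v" for v
      using norm_comp_le_if_shift_inv_sandwich_le[OF MD MA RD RA H G \<open>\<epsilon> > 0\<close>] by blast
    then show ?thesis using bounded_below_id_minus[of "\<lambda>v. G (H v)"] \<open>q < 1\<close> by blast
  qed
qed

lemma block_estimate_if_schur_complement_bounded_below:
  assumes G: "bounded_linear G" and GC: "\<forall>x\<in>DA. G (A x) = C x"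
    and H: "bounded_linear H" and HB: "\<forall>y\<in>DD. H (D y) = B y"
    and schur: "bounded_below (\<lambda>u. u - H (G u)) \<or> bounded_below (\<lambda>v. v - G (H v))"
  shows "\<exists>K. \<forall>x\<in>DA. \<forall>y\<in>DD. norm (A x, D y) \<le> K * norm (A x + B y, C x + D y)"
proof -
  have "bounded_below (\<lambda>(u, v). (u + H v, G u + v))"
    using schur bounded_below_block_operator[OF G H] bounded_below_block_operator'[OF G H] by blast
  then obtain K where K: "\<And>u v. norm (u, v) \<le> K * norm (u + H v, G u + v)"
    unfolding bounded_below_def by auto
  have "norm (A x, D y) \<le> K * norm (A x + B y, C x + D y)" if "x \<in> DA" "y \<in> DD" for x y
    using K[of "A x" "D y"] GC HB that by simp
  then show ?thesis by blast
qed

theorem proposition4p4: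
  fixes DA :: "'a::{complex_normed_vector,banach} set" and A :: "'a \<Rightarrow> 'a"
    and DD :: "'b::{complex_normed_vector,banach} set" and D :: "'b \<Rightarrow> 'b"
    and DB :: "'b set" and B :: "'b \<Rightarrow> 'a"
    and DC :: "'a set" and C :: "'a \<Rightarrow> 'b"
    and cA cD :: real
  assumes A: "closed_dd_op DA A" and D: "closed_dd_op DD D"
    and B: "lin_op DB B" and C: "lin_op DC C"
    and DDB: "DD \<subseteq> DB" and DAC: "DA \<subseteq> DC"
    and cA: "cA \<ge> 0" and cD: "cD \<ge> 0"
    and Cbd: "\<forall>x\<in>DA. norm (C x) \<le> cA * norm (A x)"
    and Bbd: "\<forall>y\<in>DD. norm (B y) \<le> cD * norm (D y)"
    and RA: "closure (A ` DA) = UNIV" and RD: "closure (D ` DD) = UNIV"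
  shows "(\<exists>!G. bounded_clinear G \<and> (\<forall>x\<in>DA. G (A x) = C x))
    \<and> (\<exists>!H. bounded_clinear H \<and> (\<forall>y\<in>DD. H (D y) = B y))
    \<and> (\<forall>G H. bounded_clinear G \<and> (\<forall>x\<in>DA. G (A x) = C x)
          \<and> bounded_clinear H \<and> (\<forall>y\<in>DD. H (D y) = B y)
          \<and> (boundedly_invertible (\<lambda>u. u - H (G u)) \<or> boundedly_invertible (\<lambda>v. v - G (H v)))
        \<longrightarrow> (\<exists>K. \<forall>x\<in>DA. \<forall>y\<in>DD. norm (A x, D y) \<le> K * norm (A x + B y, C x + D y)))
    \<and> (sectorial DA A \<and> sectorial DD D \<and>
        (\<exists>\<epsilon>>0.
          (\<exists>q<1. \<forall>t\<in>{0<..<\<epsilon>}.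
             onorm (\<lambda>u. B (pinv DD (\<lambda>y. complex_of_real t *\<^sub>C y + D y)
                       (C (pinv DA (\<lambda>x. complex_of_real t *\<^sub>C x + A x) u)))) \<le> q)
        \<or> (\<exists>q<1. \<forall>t\<in>{0<..<\<epsilon>}.
             onorm (\<lambda>v. C (pinv DA (\<lambda>x. complex_of_real t *\<^sub>C x + A x)
                       (B (pinv DD (\<lambda>y. complex_of_real t *\<^sub>C y + D y) v)))) \<le> q))
        \<longrightarrow> (\<exists>K. \<forall>x\<in>DA. \<forall>y\<in>DD. norm (A x, D y) \<le> K * norm (A x + B y, C x + D y)))"
proof -
  have LA: "lin_op DA A" and LD: "lin_op DD D" using A D by (simp_all add: closed_dd_op_def)
  have G: "\<exists>!G. bounded_clinear G \<and> (\<forall>x\<in>DA. G (A x) = C x)"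
    by (rule ex1_bounded_clinear_extension[OF LA C DAC cA Cbd RA])
  have H: "\<exists>!H. bounded_clinear H \<and> (\<forall>y\<in>DD. H (D y) = B y)"
    by (rule ex1_bounded_clinear_extension[OF LD B DDB cD Bbd RD])
  show ?thesis
    unfolding pinv_scaleC_of_real_eq_shift_inv
  proof (intro conjI allI impI G H, goal_cases)
    case (1 G H)
    then show ?case
      by (intro block_estimate_if_schur_complement_bounded_below)
        (auto simp: bounded_clinear_imp_bounded_linear boundedly_invertible_imp_bounded_below)
  next
    case 2
    then obtain MA MD where MA: "nonnegative_operator DA A MA" and MD: "nonnegative_operator DD D MD"
      using sectorial_imp_nonnegative_operator by meson
    obtain G H where "bounded_clinear G" "\<forall>x\<in>DA. G (A x) = C x"
      and "bounded_clinear H" "\<forall>y\<in>DD. H (D y) = B y"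
      using G H by blast
    then have G: "bounded_linear G" "\<forall>x\<in>DA. G (A x) = C x"
      and H: "bounded_linear H" "\<forall>y\<in>DD. H (D y) = B y"
      by (simp_all add: bounded_clinear_imp_bounded_linear)
    have "bounded_below (\<lambda>u. u - H (G u)) \<or> bounded_below (\<lambda>v. v - G (H v))"
      using bounded_below_schur_complement_if_sandwich_lt1[OF MA MD RA RD G H] 2 by blast
    then show ?case by (rule block_estimate_if_schur_complement_bounded_below[OF G H])
  qed
qed

end
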